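(* Let $(G,+)$ be an abelian group with identity $0$. (1) Let $M$ be a (loopless) matroid over $G$. If $M$ is matched to itself, then $0\notin E(M)$. (2) If $G$ satisfies the matroid matching property, then $G$ is either torsion-free or cyclic of prime order.
   Context: A matroid over $G$ is a matroid $M$ whose finite ground set $E(M)$ is a subset of $G$; all matroids are assumed loopless, i.e. every element lies in some independent set. $r(M)$ denotes the rank of $M$. For matroids $M,N$ over $G$ with $r(M)=r(N)=n>0$ and bases $\mathcal{M}=\{a_1,\dots,a_n\}$ of $M$ and $\mathcal{N}=\{b_1,\dots,b_n\}$ of $N$, we say $\mathcal{M}$ is matched to $\mathcal{N}$ if there is a permutation $\pi\in S_n$ with $a_i+b_{\pi(i)}\notin E(M)$ for all $1\le i\le n$. $M$ is matched to $N$ if for every basis $\mathcal{M}$ of $M$ there exists a basis $\mathcal{N}$ of $N$ such that $\mathcal{M}$ is matched to $\mathcal{N}$. The group $G$ has the matroid matching property if for every two matroids $M,N$ over $G$ with $r(M)=r(N)=n>0$, $|E(M)|\le |E(N)|$ and $0\notin E(N)$, $M$ is matched to $N$. *)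

theory Defs
  imports "HOL-Computational_Algebra.Primes"
begin

type_synonym 'a matroid = "'a set \<times> ('a set \<Rightarrow> bool)"

definition ground :: "'a matroid \<Rightarrow> 'a set" where
  "ground M = fst M"

definition indep :: "'a matroid \<Rightarrow> 'a set \<Rightarrow> bool" where
  "indep M = snd M"

definition matroid :: "'a matroid \<Rightarrow> bool" where
  "matroid M \<longleftrightarrow>
     finite (ground M) \<and>
     indep M {} \<and>
     (\<forall>A. indep M A \<longrightarrow> A \<subseteq> ground M) \<and>
     (\<forall>A B. indep M B \<and> A \<subseteq> B \<longrightarrow> indep M A) \<and>
     (\<forall>A B. indep M A \<and> indep M B \<and> card A < card B \<longrightarrow>
        (\<exists>x\<in>B - A. indep M (insert x A)))"

definition loopless :: "'a matroid \<Rightarrow> bool" where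
  "loopless M \<longleftrightarrow> (\<forall>e\<in>ground M. \<exists>A. indep M A \<and> e \<in> A)"

definition basis :: "'a matroid \<Rightarrow> 'a set \<Rightarrow> bool" where
  "basis M B \<longleftrightarrow> indep M B \<and> (\<forall>C. indep M C \<and> B \<subseteq> C \<longrightarrow> C = B)"

definition mrank :: "'a matroid \<Rightarrow> nat" where
  "mrank M = Max (card ` {A. indep M A})"

definition bases_matched :: "'a::ab_group_add matroid \<Rightarrow> 'a set \<Rightarrow> 'a set \<Rightarrow> bool" where
  "bases_matched M A B \<longleftrightarrow>
     (\<exists>\<pi>. bij_betw \<pi> A B \<and> (\<forall>a\<in>A. a + \<pi> a \<notin> ground M))"

definition matched_to :: "'a::ab_group_add matroid \<Rightarrow> 'a matroid \<Rightarrow> bool" where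
  "matched_to M N \<longleftrightarrow>
     (\<forall>A. basis M A \<longrightarrow> (\<exists>B. basis N B \<and> bases_matched M A B))"

definition matroid_matching_property :: "'a::ab_group_add itself \<Rightarrow> bool" where
  "matroid_matching_property _ \<longleftrightarrow>
     (\<forall>(M::'a matroid) (N::'a matroid) n.
        matroid M \<and> loopless M \<and> matroid N \<and> loopless N \<and>
        mrank M = n \<and> mrank N = n \<and> n > 0 \<and>
        card (ground M) \<le> card (ground N) \<and> (0::'a) \<notin> ground N
        \<longrightarrow> matched_to M N)"

definition nsmul :: "nat \<Rightarrow> 'a::ab_group_add \<Rightarrow> 'a" where
  "nsmul n x = ((+) x ^^ n) 0"

definition zsmul :: "int \<Rightarrow> 'a::ab_group_add \<Rightarrow> 'a" where
  "zsmul k x = (if k \<ge> 0 then nsmul (nat k) x else - nsmul (nat (- k)) x)"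

definition torsion_free :: "'a::ab_group_add itself \<Rightarrow> bool" where
  "torsion_free _ \<longleftrightarrow> (\<forall>(x::'a) n. x \<noteq> 0 \<and> n > 0 \<longrightarrow> nsmul n x \<noteq> 0)"

definition cyclic_of_prime_order :: "'a::ab_group_add itself \<Rightarrow> bool" where
  "cyclic_of_prime_order _ \<longleftrightarrow>
     finite (UNIV :: 'a set) \<and> prime (card (UNIV :: 'a set)) \<and>
     (\<exists>g::'a. \<forall>x. \<exists>k. x = zsmul k g)"

end

theory Submission
  imports Defs
begin

text \<open>(1) As \<open>M\<close> is loopless, \<open>{0}\<close> extends to a basis \<open>B\<close>; the partner \<open>b\<close> of \<open>0\<close>
  under any matching of \<open>B\<close> with a basis of \<open>M\<close> gives \<open>0 + b = b \<in> E(M)\<close>.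
  (2) Let \<open>x \<noteq> 0\<close> have the least order \<open>n\<close> among all nonzero torsion elements; \<open>n\<close> is prime
  and \<open>H = \<langle>x\<rangle>\<close> has \<open>n\<close> elements. If some \<open>y \<notin> H\<close> existed, compare the free matroids on
  \<open>H\<close> and on \<open>T = (H - {0}) \<union> {y}\<close>: a bijection \<open>\<pi> : H \<rightarrow> T\<close> sends at least one of the
  \<open>n \<ge> 2\<close> elements of \<open>H\<close> into \<open>H\<close>, and then \<open>a + \<pi> a \<in> H\<close> as \<open>H\<close> is a subgroup.\<close>

lemma indep_extends_to_basis:
  assumes "matroid M" "indep M A"
  obtains B where "basis M B" "A \<subseteq> B"
proof -
  have "finite {C. indep M C}"
    using assms(1) unfolding matroid_def by (metis Collect_mono Pow_def finite_Pow_iff rev_finite_subset)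
  then obtain B where "indep M B" "A \<subseteq> B" "\<forall>C. indep M C \<and> B \<subseteq> C \<longrightarrow> B = C"
    using finite_has_maximal2[of "{C. indep M C}" A] assms(2) by auto
  then show thesis
    using that unfolding basis_def by metis
qed

lemma matched_to_self_zero_notin_ground:
  fixes M :: "'a::ab_group_add matroid"
  assumes "matroid M" "loopless M" "matched_to M M"
  shows "0 \<notin> ground M"
proof
  assume "0 \<in> ground M"
  then obtain A where "indep M A" "0 \<in> A"
    using assms(2) unfolding loopless_def by blast
  then obtain B where B: "basis M B" "0 \<in> B"
    using indep_extends_to_basis[OF assms(1)] by (metis subsetD)
  then obtain B' \<pi> where "basis M B'" "bij_betw \<pi> B B'" "\<forall>a\<in>B. a + \<pi> a \<notin> ground M"
    using assms(3) unfolding matched_to_def bases_matched_def by blast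
  moreover have "B' \<subseteq> ground M"
    using \<open>basis M B'\<close> assms(1) unfolding basis_def matroid_def by blast
  ultimately show False
    using B(2) by (metis add_0 bij_betwE subsetD)
qed

lemma nsmul_0 [simp]: "nsmul 0 x = 0"
  by (simp add: nsmul_def)

lemma nsmul_Suc: "nsmul (Suc n) x = x + nsmul n x"
  by (simp add: nsmul_def)

lemma nsmul_1 [simp]: "nsmul 1 x = x"
  by (simp add: nsmul_def)

lemma nsmul_zero [simp]: "nsmul n (0::'a::ab_group_add) = 0"
  by (induction n) (simp_all add: nsmul_Suc)

lemma nsmul_add: "nsmul (m + n) x = nsmul m x + nsmul n x"
  by (induction m) (simp_all add: nsmul_Suc add.assoc)

lemma nsmul_mult: "nsmul (m * n) x = nsmul m (nsmul n x)"
  by (induction m) (simp_all add: nsmul_Suc nsmul_add add.commute)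

lemma nsmul_mod:
  assumes "nsmul n x = 0"
  shows "nsmul k x = nsmul (k mod n) x"
proof -
  have "nsmul k x = nsmul (k div n * n) x + nsmul (k mod n) x"
    by (metis div_mult_mod_eq nsmul_add)
  then show ?thesis
    by (simp add: nsmul_mult assms)
qed

lemma prime_if_least_torsion_order:
  fixes x :: "'a::ab_group_add"
  assumes "x \<noteq> 0" "nsmul n x = 0" "n > 0"
    and least: "\<And>m (z::'a). 0 < m \<Longrightarrow> m < n \<Longrightarrow> z \<noteq> 0 \<Longrightarrow> nsmul m z \<noteq> 0"
  shows "prime n"
proof -
  have "n \<noteq> 1"
    using assms(1,2) nsmul_1 by metis
  moreover have "m = 1 \<or> m = n" if "m dvd n" for m
  proof (rule ccontr)
    assume "\<not> (m = 1 \<or> m = n)"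
    obtain k where k: "n = m * k"
      using \<open>m dvd n\<close> by blast
    then have "0 < m" "m < n" "0 < k" "k < n"
      using \<open>n > 0\<close> \<open>\<not> (m = 1 \<or> m = n)\<close> by (auto simp: nat_0_less_mult_iff)
    then have "nsmul m x \<noteq> 0" "nsmul k (nsmul m x) = 0"
      using least assms(1,2) k by (auto simp: nsmul_mult[symmetric] mult.commute)
    then show False
      using least \<open>0 < k\<close> \<open>k < n\<close> by blast
  qed
  ultimately show ?thesis
    using \<open>n > 0\<close> by (simp add: prime_nat_iff)
qed

definition multiples :: "'a::ab_group_add \<Rightarrow> 'a set" where
  "multiples x = range (\<lambda>k. nsmul k x)"

lemma zero_in_multiples: "0 \<in> multiples x"
  unfolding multiples_def by (metis nsmul_0 rangeI)

lemma multiples_add_closed: "a \<in> multiples x \<Longrightarrow> b \<in> multiples x \<Longrightarrow> a + b \<in> multiples x"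
  unfolding multiples_def by (auto simp: nsmul_add[symmetric])

lemma multiples_eq_image_order:
  assumes "nsmul n x = 0" "n > 0"
  shows "multiples x = (\<lambda>k. nsmul k x) ` {..<n}"
  unfolding multiples_def using nsmul_mod[OF assms(1)] assms(2)
  by (auto intro!: image_eqI[where x = "_ mod n"])

lemma card_multiples:
  assumes "nsmul n x = 0" "n > 0" and least: "\<And>m. 0 < m \<Longrightarrow> m < n \<Longrightarrow> nsmul m x \<noteq> 0"
  shows "card (multiples x) = n"
proof -
  have "nsmul i x \<noteq> nsmul j x" if "i < j" "j < n" for i j
  proof
    assume "nsmul i x = nsmul j x"
    moreover have "nsmul j x = nsmul (j - i) x + nsmul i x"
      using \<open>i < j\<close> by (simp add: nsmul_add[symmetric])
    ultimately show False
      using least[of "j - i"] that by simp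
  qed
  then have "inj_on (\<lambda>k. nsmul k x) {..<n}"
    by (intro inj_onI) (metis lessThan_iff linorder_neqE_nat)
  then show ?thesis
    by (simp add: multiples_eq_image_order[OF assms(1,2)] card_image)
qed

definition free_matroid :: "'a set \<Rightarrow> 'a matroid" where
  "free_matroid S = (S, \<lambda>A. A \<subseteq> S)"

lemma ground_free_matroid [simp]: "ground (free_matroid S) = S"
  by (simp add: free_matroid_def ground_def)

lemma indep_free_matroid [simp]: "indep (free_matroid S) A \<longleftrightarrow> A \<subseteq> S"
  by (simp add: free_matroid_def indep_def)

lemma matroid_free_matroid:
  assumes "finite S"
  shows "matroid (free_matroid S)"
proof -
  have "\<exists>x\<in>B - A. x \<in> S" if "A \<subseteq> S" "B \<subseteq> S" "card A < card B" for A B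
  proof -
    have "\<not> B \<subseteq> A"
      using that assms by (meson card_mono finite_subset leD)
    then show ?thesis
      using that by blast
  qed
  then show ?thesis
    unfolding matroid_def using assms by auto
qed

lemma loopless_free_matroid: "loopless (free_matroid S)"
  unfolding loopless_def by auto

lemma mrank_free_matroid:
  assumes "finite S"
  shows "mrank (free_matroid S) = card S"
proof -
  have "Collect (indep (free_matroid S)) = Pow S"
    by auto
  then show ?thesis
    unfolding mrank_def using assms by (intro Max_eqI) (auto intro: card_mono)
qed

lemma basis_free_matroid_iff: "basis (free_matroid S) B \<longleftrightarrow> B = S"
  unfolding basis_def by auto

lemma add_closed_not_matched_to_punctured:
  fixes H :: "'a::ab_group_add set"
  assumes "\<forall>a\<in>H. \<forall>b\<in>H. a + b \<in> H" "2 \<le> card H"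
  shows "\<not> matched_to (free_matroid H) (free_matroid (insert y (H - {0})))"
proof
  assume "matched_to (free_matroid H) (free_matroid (insert y (H - {0})))"
  then obtain \<pi> where \<pi>: "bij_betw \<pi> H (insert y (H - {0}))" "\<forall>a\<in>H. a + \<pi> a \<notin> H"
    unfolding matched_to_def basis_free_matroid_iff bases_matched_def by auto
  have "finite H" "\<not> card H \<le> Suc 0"
    using assms(2) card.infinite by fastforce+
  then obtain a b where "a \<in> H" "b \<in> H" "a \<noteq> b"
    using card_le_Suc0_iff_eq by blast
  then have "\<pi> a \<noteq> \<pi> b"
    using \<pi>(1) unfolding bij_betw_def inj_on_def by blast
  then obtain c where "c \<in> H" "\<pi> c \<noteq> y"
    using \<open>a \<in> H\<close> \<open>b \<in> H\<close> by metis
  then have "\<pi> c \<in> H"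
    using bij_betwE[OF \<pi>(1)] by blast
  then show False
    using assms(1) \<pi>(2) \<open>c \<in> H\<close> by blast
qed

lemma matching_property_add_closed_eq_UNIV:
  fixes H :: "'a::ab_group_add set"
  assumes "matroid_matching_property TYPE('a)"
    and "\<forall>a\<in>H. \<forall>b\<in>H. a + b \<in> H" "0 \<in> H" "2 \<le> card H"
  shows "H = UNIV"
proof (rule ccontr)
  assume "H \<noteq> UNIV"
  then obtain y where "y \<notin> H"
    by blast
  define T where "T = insert y (H - {0})"
  have "finite H"
    using assms(4) card.infinite by fastforce
  then have "finite T" "card T = card H" "0 \<notin> T"
    using \<open>y \<notin> H\<close> \<open>0 \<in> H\<close> assms(4) by (auto simp: T_def card_Diff_singleton)
  then have "matched_to (free_matroid H) (free_matroid T)"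
    using assms(1)[unfolded matroid_matching_property_def, rule_format,
        of "free_matroid H" "free_matroid T" "card H"] assms(4) \<open>finite H\<close>
    by (simp add: matroid_free_matroid loopless_free_matroid mrank_free_matroid)
  then show False
    using add_closed_not_matched_to_punctured[OF assms(2,4)] by (simp add: T_def)
qed

lemma obtain_least_torsion_order:
  assumes "\<not> torsion_free TYPE('a::ab_group_add)"
  obtains x :: "'a::ab_group_add" and n where "x \<noteq> 0" "nsmul n x = 0" "n > 0"
    "\<And>m (z::'a). 0 < m \<Longrightarrow> m < n \<Longrightarrow> z \<noteq> 0 \<Longrightarrow> nsmul m z \<noteq> 0"
proof -
  define P where "P n \<longleftrightarrow> n > 0 \<and> (\<exists>x::'a. x \<noteq> 0 \<and> nsmul n x = 0)" for n
  have "\<exists>n. P n"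
    using assms unfolding torsion_free_def P_def by blast
  then have "P (LEAST n. P n)" and least: "\<And>m. m < (LEAST n. P n) \<Longrightarrow> \<not> P m"
    by (metis LeastI_ex) (metis not_less_Least)
  then obtain x :: 'a where "x \<noteq> 0" "nsmul (LEAST n. P n) x = 0" "(LEAST n. P n) > 0"
    unfolding P_def by blast
  moreover have "nsmul m z \<noteq> 0" if "0 < m" "m < (LEAST n. P n)" "z \<noteq> 0" for m and z :: 'a
    using least[OF that(2)] that(1,3) unfolding P_def by blast
  ultimately show thesis
    by (rule that)
qed

lemma cyclic_of_prime_order_if_multiples_eq_UNIV:
  fixes x :: "'a::ab_group_add"
  assumes "multiples x = UNIV" "prime (card (UNIV :: 'a set))"
  shows "cyclic_of_prime_order TYPE('a)"
  unfolding cyclic_of_prime_order_def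
proof (intro conjI exI[of _ x] allI)
  show "finite (UNIV :: 'a set)"
    using assms(2) card.infinite not_prime_0 by metis
  show "prime (card (UNIV :: 'a set))"
    by (fact assms(2))
  fix y :: 'a
  obtain k where "y = nsmul k x"
    using assms(1) unfolding multiples_def by (metis UNIV_I imageE)
  then have "y = zsmul (int k) x"
    by (simp add: zsmul_def)
  then show "\<exists>k. y = zsmul k x" ..
qed

lemma matching_property_not_torsion_free_imp_cyclic:
  assumes "matroid_matching_property TYPE('a::ab_group_add)" "\<not> torsion_free TYPE('a)"
  shows "cyclic_of_prime_order TYPE('a)"
proof -
  obtain x :: 'a and n where x: "x \<noteq> 0" "nsmul n x = 0" "n > 0"
    and least: "\<And>m (z::'a). 0 < m \<Longrightarrow> m < n \<Longrightarrow> z \<noteq> 0 \<Longrightarrow> nsmul m z \<noteq> 0"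
    using obtain_least_torsion_order[OF assms(2)] by blast
  have "prime n" "card (multiples x) = n"
    using prime_if_least_torsion_order[OF x least] card_multiples[OF x(2,3)] least x(1) by auto
  moreover from this have "multiples x = UNIV"
    using matching_property_add_closed_eq_UNIV[OF assms(1)] multiples_add_closed zero_in_multiples
    by (metis prime_ge_2_nat)
  ultimately show ?thesis
    using cyclic_of_prime_order_if_multiples_eq_UNIV by metis
qed

theorem proposition1p8:
  shows "(\<forall>M::('a::ab_group_add) matroid.
            matroid M \<and> loopless M \<and> matched_to M M \<longrightarrow> 0 \<notin> ground M)
       \<and> (matroid_matching_property TYPE('a) \<longrightarrow>
            torsion_free TYPE('a) \<or> cyclic_of_prime_order TYPE('a))"
  using matched_to_self_zero_notin_ground matching_property_not_torsion_free_imp_cyclic by blast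

end
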